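(* Let $\Xi\subseteq\mathbb R^m$ be closed, let $\xi^1,\dots,\xi^N\in\Xi$, $P_0=\frac1N\sum_{i=1}^N\delta_{\xi^i}$, $\rho>0$, and $\mathcal D=\{Q: W_1(Q,P_0)\le\rho\}$, where $W_1$ is the 1-Wasserstein distance with ground metric $\|\cdot\|_2$ on distributions supported on $\Xi$. Let $\alpha\in(0,1)$, $\lambda\le\alpha$, $\bar\lambda=\frac{\alpha-\lambda}{1+\alpha-2\lambda}$. Let $\mathcal F$ be the set of feasible path flows (OD demand conservation, nonnegativity), and for $f\in\mathcal F$ let $Z(f,\cdot):\Xi\to\mathbb R$ be measurable, upper semicontinuous and of at most linear growth. Define $$\Phi^{\mathrm{DRO}}_{\alpha,\lambda}(f)=\sup_{Q\in\mathcal D}\big\{(1-\bar\lambda)\mathbb E_Q[Z(f,\xi)]+\bar\lambda\operatorname{CVaR}_{\alpha,Q}(Z(f,\xi))\big\},\qquad g_t(f,\xi)=(1-\bar\lambda)Z(f,\xi)+\frac{\bar\lambda}{1-\alpha}(Z(f,\xi)-t)_+ .$$ Then for all $f\in\mathcal F$, $$\Phi^{\mathrm{DRO}}_{\alpha,\lambda}(f)\le\inf_{t\in\mathbb R,\ \kappa\ge0}\Big\{\bar\lambda t+\kappa\rho+\frac1N\sum_{i=1}^N\sup_{\xi\in\Xi}\big(g_t(f,\xi)-\kappa\|\xi-\xi^i\|_2\big)\Big\}.$$ Moreover, suppose $\Xi$ is also convex, the minimax interchange $\sup_{Q\in\mathcal D}\inf_{t}\{\bar\lambda t+\mathbb E_Q[g_t(f,\xi)]\}=\inf_t\sup_{Q\in\mathcal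 D}\{\bar\lambda t+\mathbb E_Q[g_t(f,\xi)]\}$ holds, and $\xi\mapsto g_t(f,\xi)$ satisfies the piecewise-concave condition (it equals $\max_{j=1,\dots,J}\ell_j(\xi)$ for finitely many $\ell_j:\mathbb R^m\to\mathbb R\cup\{-\infty\}$ such that each $-\ell_j$ is proper, convex and lower semicontinuous and $\ell_j$ is not identically $-\infty$ on $\Xi$; e.g. $g_t(f,\cdot)$ piecewise affine). Then the inequality holds with equality, and minimizing $\Phi^{\mathrm{DRO}}_{\alpha,\lambda}(f)$ over $f\in\mathcal F$ is equivalent to the semi-infinite convex program $$\min_{f\in\mathcal F,\,t\in\mathbb R,\,\kappa\ge0,\,s\in\mathbb R^N}\ \bar\lambda t+\kappa\rho+\frac1N\sum_{i=1}^Ns_i\quad\text{s.t. } s_i\ge g_t(f,\xi)-\kappa\|\xi-\xi^i\|_2\ \ \forall\xi\in\Xi,\ i=1,\dots,N.$$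
   Context: $\operatorname{CVaR}_{\alpha,Q}(Y):=\inf_{\gamma\in\mathbb R}\{\gamma+\frac1{1-\alpha}\mathbb E_Q[(Y-\gamma)_+]\}$; $(x)_+=\max\{x,0\}$. $W_1(Q,P_0)=\inf_{\pi}\mathbb E_{(\xi,\xi_0)\sim\pi}\|\xi-\xi_0\|_2$ over couplings $\pi$ of $Q$ and $P_0$. In the paper $Z(f,\xi)$ is the TSUE system potential under uncertain parameters $\xi$, $P_0$ the empirical distribution of $N$ observed samples, and $\Phi^{\mathrm{DRO}}_{\alpha,\lambda}$ the worst-case normalized mean–CVaR certainty equivalent. *)

theory Defs
  imports "HOL-Probability.Probability"
begin

text \<open>Paths form a finite type 'p; each path serves one OD pair (od p);
  demand w is the travel demand of OD pair w. Feasible flows: nonnegative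
  path flows satisfying OD demand conservation.\<close>
definition feasible_flows :: "('p::finite \<Rightarrow> 'w) \<Rightarrow> ('w \<Rightarrow> real) \<Rightarrow> ('p \<Rightarrow> real) set" where
  "feasible_flows od demand =
     {f. (\<forall>p. 0 \<le> f p) \<and> (\<forall>w. (\<Sum>p | od p = w. f p) = demand w)}"

definition XiSpace :: "'a::euclidean_space set \<Rightarrow> 'a measure" where
  "XiSpace Xi = restrict_space borel Xi"

definition dists_on :: "'a::euclidean_space set \<Rightarrow> 'a measure set" where
  "dists_on Xi = {Q. prob_space Q \<and> sets Q = sets (XiSpace Xi)}"

definition empirical :: "'a::euclidean_space set \<Rightarrow> nat \<Rightarrow> (nat \<Rightarrow> 'a) \<Rightarrow> 'a measure" where
  "empirical Xi N xi0 = distr (uniform_count_measure {..<N}) (XiSpace Xi) xi0"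

definition couplings :: "'a::euclidean_space set \<Rightarrow> 'a measure \<Rightarrow> 'a measure \<Rightarrow> ('a \<times> 'a) measure set" where
  "couplings Xi Q P = {\<pi>. prob_space \<pi> \<and> sets \<pi> = sets (XiSpace Xi \<Otimes>\<^sub>M XiSpace Xi)
      \<and> distr \<pi> (XiSpace Xi) fst = Q \<and> distr \<pi> (XiSpace Xi) snd = P}"

definition W1 :: "'a::euclidean_space set \<Rightarrow> 'a measure \<Rightarrow> 'a measure \<Rightarrow> ennreal" where
  "W1 Xi Q P = (INF \<pi>\<in>couplings Xi Q P. \<integral>\<^sup>+ z. ennreal (norm (fst z - snd z)) \<partial>\<pi>)"

definition wass_ball :: "'a::euclidean_space set \<Rightarrow> nat \<Rightarrow> (nat \<Rightarrow> 'a) \<Rightarrow> real \<Rightarrow> 'a measure set" where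
  "wass_ball Xi N xi0 \<rho> = {Q \<in> dists_on Xi. W1 Xi Q (empirical Xi N xi0) \<le> ennreal \<rho>}"

definition CVaR :: "real \<Rightarrow> 'a measure \<Rightarrow> ('a \<Rightarrow> real) \<Rightarrow> real" where
  "CVaR \<alpha> Q Y = (INF \<gamma>. \<gamma> + 1 / (1 - \<alpha>) * (\<integral>\<xi>. max (Y \<xi> - \<gamma>) 0 \<partial>Q))"

definition lambda_bar :: "real \<Rightarrow> real \<Rightarrow> real" where
  "lambda_bar \<alpha> lam = (\<alpha> - lam) / (1 + \<alpha> - 2 * lam)"

definition Phi_DRO :: "'a::euclidean_space set \<Rightarrow> nat \<Rightarrow> (nat \<Rightarrow> 'a) \<Rightarrow> real \<Rightarrow> real \<Rightarrow> real
    \<Rightarrow> ('a \<Rightarrow> real) \<Rightarrow> ereal" where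
  "Phi_DRO Xi N xi0 \<rho> \<alpha> lam Y =
     (SUP Q\<in>wass_ball Xi N xi0 \<rho>.
        ereal ((1 - lambda_bar \<alpha> lam) * (\<integral>\<xi>. Y \<xi> \<partial>Q) + lambda_bar \<alpha> lam * CVaR \<alpha> Q Y))"

definition g_fun :: "real \<Rightarrow> real \<Rightarrow> real \<Rightarrow> real \<Rightarrow> real" where
  "g_fun \<alpha> lam t z = (1 - lambda_bar \<alpha> lam) * z + lambda_bar \<alpha> lam / (1 - \<alpha>) * max (z - t) 0"

definition usc_on :: "'a::topological_space set \<Rightarrow> ('a \<Rightarrow> real) \<Rightarrow> bool" where
  "usc_on S h = (\<forall>x\<in>S. \<forall>c. h x < c \<longrightarrow> (\<forall>\<^sub>F y in at x within S. h y < c))"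

text \<open>Upper semicontinuity of an extended-real function on the whole space
  (equivalently: its negative is lower semicontinuous).\<close>
definition usc_ereal :: "('a::topological_space \<Rightarrow> ereal) \<Rightarrow> bool" where
  "usc_ereal h = (\<forall>x c. h x < c \<longrightarrow> (\<forall>\<^sub>F y in at x. h y < c))"

text \<open>-l is a proper convex function (values in R \<union> {+\<infinity>}, not identically +\<infinity>,
  convex on its effective domain), stated in terms of l.\<close>
definition neg_proper_convex :: "('a::real_vector \<Rightarrow> ereal) \<Rightarrow> bool" where
  "neg_proper_convex l =
     ((\<forall>x. l x < \<infinity>) \<and> (\<exists>x. l x > -\<infinity>) \<and>
      (\<forall>x y u. l x > -\<infinity> \<longrightarrow> l y > -\<infinity> \<longrightarrow> 0 \<le> u \<longrightarrow> u \<le> 1 \<longrightarrow>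
         ereal u * l x + ereal (1 - u) * l y \<le> l (u *\<^sub>R x + (1 - u) *\<^sub>R y)))"

definition piecewise_concave_on :: "'a::euclidean_space set \<Rightarrow> ('a \<Rightarrow> real) \<Rightarrow> bool" where
  "piecewise_concave_on Xi h =
     (\<exists>J::nat. \<exists>l::nat \<Rightarrow> 'a \<Rightarrow> ereal. 0 < J \<and>
        (\<forall>j<J. neg_proper_convex (l j) \<and> usc_ereal (l j) \<and> (\<exists>\<xi>\<in>Xi. l j \<xi> \<noteq> -\<infinity>)) \<and>
        (\<forall>\<xi>\<in>Xi. ereal (h \<xi>) = (MAX j\<in>{..<J}. l j \<xi>)))"

end

(* Rockafellar-Uryasev turns the mean-CVaR certainty equivalent into an infimum over t of
   lambda_bar t + E_Q g_t, so the worst case over the Wasserstein ball is a sup-inf.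

   Weak duality: if g_t xi - kappa |xi - xi^i| <= s_i on Xi for every sample, then integrating
   this bound against a coupling of Q with the empirical measure gives
   E_Q g_t <= kappa W_1(Q, P_0) + mean s <= kappa rho + mean s.

   Strong duality (t fixed): finitely supported plans that move the i-th sample to random points
   of Xi form a convex family on which transport cost and expected value are affine, and the
   empirical measure is a Slater point of cost 0 < rho.  Hence a Lagrange multiplier kappa >= 0
   exists, and the Lagrangian is maximised by deterministic plans, where it splits into one
   supremum per sample.  The assumed minimax interchange makes the two bounds meet. *)

theory Submission
  imports Defs
begin

lemma lagrange_slopes_ordered:
  fixes cost val :: "'b \<Rightarrow> real"
  assumes mix: "\<And>p q u. p \<in> Pl \<Longrightarrow> q \<in> Pl \<Longrightarrow> 0 \<le> u \<Longrightarrow> u \<le> 1 \<Longrightarrow>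
        \<exists>r\<in>Pl. cost r = u * cost p + (1 - u) * cost q \<and> val r = u * val p + (1 - u) * val q"
    and bound: "\<And>p. p \<in> Pl \<Longrightarrow> cost p \<le> \<rho> \<Longrightarrow> val p \<le> V"
    and p: "p \<in> Pl" "\<rho> < cost p" and q: "q \<in> Pl" "cost q < \<rho>"
  shows "(val p - V) / (cost p - \<rho>) \<le> (V - val q) / (\<rho> - cost q)"
proof -
  define u where "u = (cost p - \<rho>) / (cost p - cost q)"
  have u: "0 \<le> u" "u \<le> 1" "u * (cost p - cost q) = cost p - \<rho>"
    using p q by (auto simp: u_def field_simps)
  \<comment> \<open>the mixture of \<open>q\<close> and \<open>p\<close> with weights \<open>u\<close>, \<open>1 - u\<close> has cost exactly \<open>\<rho>\<close>\<close>
  obtain r where r: "r \<in> Pl" "cost r = u * cost q + (1 - u) * cost p"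
      "val r = u * val q + (1 - u) * val p"
    using mix[OF q(1) p(1) u(1,2)] by blast
  have "cost r = \<rho>"
    using r(2) u(3) by (simp add: algebra_simps)
  with bound r(1) have "val r \<le> V"
    by simp
  then have "u * val q + (1 - u) * val p \<le> V"
    using r(3) by simp
  then have "(u * val q + (1 - u) * val p) * (cost p - cost q) \<le> V * (cost p - cost q)"
    using p q by (intro mult_right_mono) auto
  also have "(u * val q + (1 - u) * val p) * (cost p - cost q)
      = (u * (cost p - cost q)) * (val q - val p) + (cost p - cost q) * val p"
    by (simp add: algebra_simps)
  also have "\<dots> = (cost p - \<rho>) * val q + (\<rho> - cost q) * val p"
    unfolding u(3) by (simp add: algebra_simps)
  finally have "(val p - V) * (\<rho> - cost q) \<le> (V - val q) * (cost p - \<rho>)"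
    by (simp add: algebra_simps)
  then show ?thesis
    using p q by (simp add: field_simps)
qed

lemma exists_lagrange_multiplier:
  fixes cost val :: "'b \<Rightarrow> real"
  assumes mix: "\<And>p q u. p \<in> Pl \<Longrightarrow> q \<in> Pl \<Longrightarrow> 0 \<le> u \<Longrightarrow> u \<le> 1 \<Longrightarrow>
        \<exists>r\<in>Pl. cost r = u * cost p + (1 - u) * cost q \<and> val r = u * val p + (1 - u) * val q"
    and bound: "\<And>p. p \<in> Pl \<Longrightarrow> cost p \<le> \<rho> \<Longrightarrow> val p \<le> V"
    and slater: "p0 \<in> Pl" "cost p0 < \<rho>"
  shows "\<exists>\<kappa>\<ge>0. \<forall>p\<in>Pl. val p \<le> V + \<kappa> * (cost p - \<rho>)"
proof -
  have slopes: "(val p - V) / (cost p - \<rho>) \<le> (V - val q) / (\<rho> - cost q)"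
    if "p \<in> Pl" "\<rho> < cost p" "q \<in> Pl" "cost q < \<rho>" for p q
    using mix bound that by (rule lagrange_slopes_ordered)
  define S where "S = insert 0 ((\<lambda>p. (val p - V) / (cost p - \<rho>)) ` {p\<in>Pl. \<rho> < cost p})"
  have bdd: "bdd_above S"
    unfolding S_def bdd_above_def using slopes[OF _ _ slater] bound[OF slater(1)] slater
    by (intro exI[of _ "(V - val p0) / (\<rho> - cost p0)"]) auto
  have "0 \<le> Sup S"
    by (rule cSup_upper[OF _ bdd]) (simp add: S_def)
  moreover have "val p \<le> V + Sup S * (cost p - \<rho>)" if p: "p \<in> Pl" for p
  proof (cases "\<rho> < cost p")
    case True
    have "(val p - V) / (cost p - \<rho>) \<le> Sup S"
      by (rule cSup_upper[OF _ bdd]) (use p True in \<open>auto simp: S_def\<close>)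
    then show ?thesis
      using True by (simp add: field_simps)
  next
    case False
    then have "val p \<le> V"
      using bound p by simp
    show ?thesis
    proof (cases "cost p = \<rho>")
      case False
      with \<open>\<not> \<rho> < cost p\<close> have "cost p < \<rho>" by simp
      have "Sup S \<le> (V - val p) / (\<rho> - cost p)"
        by (rule cSup_least) (use slopes[OF _ _ p \<open>cost p < \<rho>\<close>] \<open>val p \<le> V\<close> \<open>cost p < \<rho>\<close>
            in \<open>auto simp: S_def\<close>)
      then show ?thesis
        using \<open>cost p < \<rho>\<close> by (simp add: field_simps)
    qed (use \<open>val p \<le> V\<close> in simp)
  qed
  ultimately show ?thesis
    by blast
qed

lemma sum_SUP_le_of_selections:
  fixes a :: "'i \<Rightarrow> 'x \<Rightarrow> real"
  assumes "finite I" "X \<noteq> {}"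
    and "\<And>\<zeta>. (\<forall>i\<in>I. \<zeta> i \<in> X) \<Longrightarrow> (\<Sum>i\<in>I. a i (\<zeta> i)) \<le> B"
  shows "(\<Sum>i\<in>I. SUP x\<in>X. ereal (a i x)) \<le> ereal B"
  using assms
proof (induction I arbitrary: B rule: finite_induct)
  case empty
  then obtain x where "x \<in> X" by blast
  then show ?case using empty(2)[of "\<lambda>_. x"] by simp
next
  case (insert j I)
  obtain x0 where x0: "x0 \<in> X" using insert by blast
  define T where "T = (\<Sum>i\<in>I. SUP x\<in>X. ereal (a i x))"
  have IH: "T \<le> ereal (B - a j x)" if x: "x \<in> X" for x
    unfolding T_def
  proof (rule insert.IH[OF insert.prems(1)])
    fix \<zeta> assume \<zeta>: "\<forall>i\<in>I. \<zeta> i \<in> X"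
    have "(\<Sum>i\<in>insert j I. a i ((\<zeta>(j := x)) i)) \<le> B"
      using \<zeta> x by (intro insert.prems(2)) auto
    moreover have "(\<Sum>i\<in>insert j I. a i ((\<zeta>(j := x)) i)) = a j x + (\<Sum>i\<in>I. a i (\<zeta> i))"
      using insert.hyps by (simp add: sum.insert) (intro sum.cong, auto)
    ultimately show "(\<Sum>i\<in>I. a i (\<zeta> i)) \<le> B - a j x" by simp
  qed
  have "ereal (\<Sum>i\<in>I. a i x0) \<le> T"
    unfolding T_def sum_ereal[symmetric] by (intro sum_mono SUP_upper x0)
  with IH[OF x0] obtain r where r: "T = ereal r"
    by (cases T) auto
  have "(SUP x\<in>X. ereal (a j x)) \<le> ereal (B - r)"
    using IH r by (intro SUP_least) force
  then have "(SUP x\<in>X. ereal (a j x)) + T \<le> ereal B"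
    using r by (metis add_right_mono diff_add_cancel plus_ereal.simps(1))
  then show ?case
    using insert.hyps by (simp add: sum.insert T_def)
qed

lemma affine_sum_SUP_eq_INF_majorants:
  fixes a :: "nat \<Rightarrow> 'x \<Rightarrow> real"
  assumes X: "X \<noteq> {}" and b: "0 < b"
  shows "ereal c + ereal b * (\<Sum>i<N. SUP x\<in>X. ereal (a i x))
       = (INF s\<in>{s. \<forall>i<N. \<forall>x\<in>X. a i x \<le> s i}. ereal (c + b * (\<Sum>i<N. s i)))"
proof (rule antisym)
  show "ereal c + ereal b * (\<Sum>i<N. SUP x\<in>X. ereal (a i x))
      \<le> (INF s\<in>{s. \<forall>i<N. \<forall>x\<in>X. a i x \<le> s i}. ereal (c + b * (\<Sum>i<N. s i)))"
  proof (rule INF_greatest)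
    fix s assume "s \<in> {s. \<forall>i<N. \<forall>x\<in>X. a i x \<le> s i}"
    then have "(\<Sum>i<N. SUP x\<in>X. ereal (a i x)) \<le> ereal (\<Sum>i<N. s i)"
      unfolding sum_ereal[symmetric] by (intro sum_mono SUP_least) auto
    then have "ereal b * (\<Sum>i<N. SUP x\<in>X. ereal (a i x)) \<le> ereal (b * (\<Sum>i<N. s i))"
      using ereal_mult_left_mono[of _ _ "ereal b"] b by fastforce
    then show "ereal c + ereal b * (\<Sum>i<N. SUP x\<in>X. ereal (a i x)) \<le> ereal (c + b * (\<Sum>i<N. s i))"
      by (metis add_left_mono plus_ereal.simps(1))
  qed
  show "(INF s\<in>{s. \<forall>i<N. \<forall>x\<in>X. a i x \<le> s i}. ereal (c + b * (\<Sum>i<N. s i)))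
      \<le> ereal c + ereal b * (\<Sum>i<N. SUP x\<in>X. ereal (a i x))"
  proof (cases "\<exists>i<N. (SUP x\<in>X. ereal (a i x)) = \<infinity>")
    case True
    then have "(\<Sum>i<N. SUP x\<in>X. ereal (a i x)) = \<infinity>"
      by (auto simp: sum_Pinfty)
    then show ?thesis
      using b by simp
  next
    case False
    define s where "s i = real_of_ereal (SUP x\<in>X. ereal (a i x))" for i
    have s: "(SUP x\<in>X. ereal (a i x)) = ereal (s i)" if "i < N" for i
    proof -
      obtain x where "x \<in> X" using X by blast
      then have "ereal (a i x) \<le> (SUP x\<in>X. ereal (a i x))" by (rule SUP_upper)
      then show ?thesis
        using False that unfolding s_def by (cases "SUP x\<in>X. ereal (a i x)") auto
    qed
    have "a i x \<le> s i" if "i < N" "x \<in> X" for i x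
      using SUP_upper[OF \<open>x \<in> X\<close>, of "\<lambda>x. ereal (a i x)"] s[OF \<open>i < N\<close>] by simp
    then have "s \<in> {s. \<forall>i<N. \<forall>x\<in>X. a i x \<le> s i}"
      by blast
    then have "(INF s\<in>{s. \<forall>i<N. \<forall>x\<in>X. a i x \<le> s i}. ereal (c + b * (\<Sum>i<N. s i)))
        \<le> ereal (c + b * (\<Sum>i<N. s i))"
      by (rule INF_lower)
    also have "\<dots> = ereal c + ereal b * (\<Sum>i<N. SUP x\<in>X. ereal (a i x))"
      using s by simp
    finally show ?thesis .
  qed
qed

lemma lambda_bar_nonneg:
  assumes "\<alpha> < 1" "lam \<le> \<alpha>"
  shows "0 \<le> lambda_bar \<alpha> lam"
  using assms unfolding lambda_bar_def by (intro divide_nonneg_pos) auto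

lemma mean_CVaR_eq_INF:
  fixes Y :: "'a \<Rightarrow> real"
  assumes Q: "prob_space Q" and Y: "integrable Q Y" and \<alpha>: "0 \<le> \<alpha>" "\<alpha> < 1" and lam: "lam \<le> \<alpha>"
  shows "ereal ((1 - lambda_bar \<alpha> lam) * (\<integral>\<xi>. Y \<xi> \<partial>Q) + lambda_bar \<alpha> lam * CVaR \<alpha> Q Y)
       = (INF t. ereal (lambda_bar \<alpha> lam * t + (\<integral>\<xi>. g_fun \<alpha> lam t (Y \<xi>) \<partial>Q)))"
proof -
  interpret prob_space Q by (rule Q)
  define lb where "lb = lambda_bar \<alpha> lam"
  define c where "c = (1 - lb) * (\<integral>\<xi>. Y \<xi> \<partial>Q)"
  define h where "h t = t + 1 / (1 - \<alpha>) * (\<integral>\<xi>. max (Y \<xi> - t) 0 \<partial>Q)" for t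
  have lb: "0 \<le> lb"
    unfolding lb_def using \<alpha>(2) lam by (rule lambda_bar_nonneg)
  have excess: "integrable Q (\<lambda>\<xi>. max (Y \<xi> - t) 0)" for t
    using Y by (intro integrable_max integrable_diff) auto
  have objective: "lb * t + (\<integral>\<xi>. g_fun \<alpha> lam t (Y \<xi>) \<partial>Q) = c + lb * h t" for t
    using Y excess[of t] by (simp add: g_fun_def lb_def c_def h_def algebra_simps)
  have "(\<integral>\<xi>. Y \<xi> \<partial>Q) \<le> h t" for t
  proof -
    have "(\<integral>\<xi>. Y \<xi> \<partial>Q) - t = (\<integral>\<xi>. Y \<xi> - t \<partial>Q)"
      using Y by (simp add: prob_space)
    also have "\<dots> \<le> (\<integral>\<xi>. max (Y \<xi> - t) 0 \<partial>Q)"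
      using Y excess by (intro integral_mono) auto
    also have "\<dots> \<le> 1 / (1 - \<alpha>) * (\<integral>\<xi>. max (Y \<xi> - t) 0 \<partial>Q)"
    proof -
      have "0 \<le> (\<integral>\<xi>. max (Y \<xi> - t) 0 \<partial>Q)"
        by (intro integral_nonneg_AE) auto
      moreover have "1 \<le> 1 / (1 - \<alpha>)"
        using \<alpha> by (simp add: field_simps)
      ultimately show ?thesis
        by (metis mult_1 mult_right_mono)
    qed
    finally show ?thesis
      unfolding h_def by simp
  qed
  then have "bdd_below (range h)"
    by (intro bdd_belowI2)
  then have "ereal (c + lb * Inf (range h)) = (INF s\<in>range h. ereal (c + lb * s))"
    using lb by (intro continuous_at_Inf_mono) (auto intro!: monoI mult_left_mono continuous_intros)
  then show ?thesis
    unfolding CVaR_def h_def[symmetric] lb_def[symmetric] c_def[symmetric] objective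
    by (simp add: image_comp)
qed

section \<open>Weak duality\<close>

lemma space_XiSpace [simp]: "space (XiSpace Xi) = Xi"
  by (simp add: XiSpace_def space_restrict_space)

lemma measurable_XiSpace_borel [measurable]: "(\<lambda>x. x) \<in> XiSpace Xi \<rightarrow>\<^sub>M borel"
  unfolding XiSpace_def by (rule measurable_restrict_space1) simp

lemma measurable_transport_cost [measurable]:
  "(\<lambda>z. norm (fst z - snd z)) \<in> borel_measurable (XiSpace Xi \<Otimes>\<^sub>M XiSpace Xi)"
proof -
  have "fst \<in> XiSpace Xi \<Otimes>\<^sub>M XiSpace Xi \<rightarrow>\<^sub>M borel" "snd \<in> XiSpace Xi \<Otimes>\<^sub>M XiSpace Xi \<rightarrow>\<^sub>M borel"
    using measurable_compose[OF measurable_fst measurable_XiSpace_borel]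
      measurable_compose[OF measurable_snd measurable_XiSpace_borel]
    by (simp_all add: comp_def)
  then show ?thesis
    by measurable
qed

lemma measurable_coupling:
  assumes "\<pi> \<in> couplings Xi Q P" "f \<in> XiSpace Xi \<Otimes>\<^sub>M XiSpace Xi \<rightarrow>\<^sub>M M"
  shows "f \<in> \<pi> \<rightarrow>\<^sub>M M"
  using assms measurable_cong_sets[of \<pi> "XiSpace Xi \<Otimes>\<^sub>M XiSpace Xi" M M]
  by (auto simp: couplings_def)

lemma coupling_marginals:
  assumes "\<pi> \<in> couplings Xi Q P"
  shows "distr \<pi> (XiSpace Xi) fst = Q" "distr \<pi> (XiSpace Xi) snd = P"
  using assms by (simp_all add: couplings_def)

lemma space_coupling:
  assumes "\<pi> \<in> couplings Xi Q P"
  shows "space \<pi> = Xi \<times> Xi"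
  using assms sets_eq_imp_space_eq[of \<pi> "XiSpace Xi \<Otimes>\<^sub>M XiSpace Xi"]
  by (auto simp: couplings_def space_pair_measure)

lemma integrable_transport_cost:
  assumes "\<pi> \<in> couplings Xi Q P" "(\<integral>\<^sup>+ z. ennreal (norm (fst z - snd z)) \<partial>\<pi>) < \<infinity>"
  shows "integrable \<pi> (\<lambda>z. norm (fst z - snd z))"
  using assms(2) measurable_coupling[OF assms(1) measurable_transport_cost]
  by (intro integrableI_bounded) auto

lemma ex_finite_cost_coupling:
  assumes "Q \<in> wass_ball Xi N xi0 \<rho>"
  obtains \<pi> where "\<pi> \<in> couplings Xi Q (empirical Xi N xi0)"
    "(\<integral>\<^sup>+ z. ennreal (norm (fst z - snd z)) \<partial>\<pi>) < \<infinity>"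
proof -
  have "W1 Xi Q (empirical Xi N xi0) < \<infinity>"
    using assms by (auto simp: wass_ball_def intro: le_less_trans)
  then show ?thesis
    using that unfolding W1_def by (auto simp: INF_less_iff)
qed

context
  fixes Xi :: "'a::euclidean_space set" and N :: nat and xi0 :: "nat \<Rightarrow> 'a"
  assumes N_pos: "0 < N" and samples: "\<forall>i<N. xi0 i \<in> Xi"
begin

lemma Xi_nonempty: "Xi \<noteq> {}"
  using N_pos samples by auto

lemma measurable_samples: "xi0 \<in> uniform_count_measure {..<N} \<rightarrow>\<^sub>M XiSpace Xi"
  using samples
  by (auto simp: measurable_def space_uniform_count_measure sets_uniform_count_measure)

lemma integral_empirical:
  assumes "h \<in> borel_measurable (XiSpace Xi)"
  shows "(\<integral>y. h y \<partial>empirical Xi N xi0) = (\<Sum>i<N. h (xi0 i)) / N"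
  unfolding empirical_def
  by (simp add: integral_distr[OF measurable_samples assms] integral_uniform_count_measure)

lemma sample_set_sets: "xi0 ` {..<N} \<in> sets (XiSpace Xi)"
proof -
  have "xi0 ` {..<N} = Xi \<inter> xi0 ` {..<N}" "xi0 ` {..<N} \<in> sets borel"
    using samples by (auto intro: borel_closed finite_imp_closed)
  then show ?thesis
    unfolding XiSpace_def sets_restrict_space by blast
qed

lemma AE_coupling_sample:
  assumes \<pi>: "\<pi> \<in> couplings Xi Q (empirical Xi N xi0)"
  shows "AE z in \<pi>. fst z \<in> Xi \<and> (\<exists>i<N. snd z = xi0 i)"
proof -
  have sample_pred: "{y \<in> space (XiSpace Xi). y \<in> xi0 ` {..<N}} \<in> sets (XiSpace Xi)"
    using sample_set_sets samples by (simp add: Int_absorb1 image_subset_iff flip: Int_def)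
  have "AE y in empirical Xi N xi0. y \<in> xi0 ` {..<N}"
    unfolding empirical_def
    by (subst AE_distr_iff[OF measurable_samples sample_pred])
      (auto intro!: AE_I2 simp: space_uniform_count_measure)
  then have "AE y in distr \<pi> (XiSpace Xi) snd. y \<in> xi0 ` {..<N}"
    unfolding coupling_marginals[OF \<pi>] .
  then have "AE z in \<pi>. snd z \<in> xi0 ` {..<N}"
    by (subst (asm) AE_distr_iff[OF measurable_coupling[OF \<pi> measurable_snd] sample_pred])
  then show ?thesis
    by (rule AE_mp) (auto intro!: AE_I2 simp: space_coupling[OF \<pi>])
qed

lemma integrable_wass_ball:
  fixes Y :: "'a \<Rightarrow> real"
  assumes Q: "Q \<in> wass_ball Xi N xi0 \<rho>" and Y: "Y \<in> borel_measurable (XiSpace Xi)"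
    and growth: "\<forall>\<xi>\<in>Xi. \<bar>Y \<xi>\<bar> \<le> C * (1 + norm \<xi>)"
  shows "integrable Q Y"
proof -
  obtain \<pi> where \<pi>: "\<pi> \<in> couplings Xi Q (empirical Xi N xi0)"
    and finite_cost: "(\<integral>\<^sup>+ z. ennreal (norm (fst z - snd z)) \<partial>\<pi>) < \<infinity>"
    using ex_finite_cost_coupling[OF Q] by blast
  interpret prob_space \<pi> using \<pi> by (simp add: couplings_def)
  define M where "M = (\<Sum>i<N. norm (xi0 i))"
  have fst_meas: "fst \<in> \<pi> \<rightarrow>\<^sub>M XiSpace Xi"
    by (rule measurable_coupling[OF \<pi> measurable_fst])
  have "integrable \<pi> (\<lambda>z. Y (fst z))"
  proof (rule Bochner_Integration.integrable_bound)
    show "integrable \<pi> (\<lambda>z. \<bar>C\<bar> * (1 + M + norm (fst z - snd z)))"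
      using integrable_transport_cost[OF \<pi> finite_cost] by simp
    show "(\<lambda>z. Y (fst z)) \<in> borel_measurable \<pi>"
      using measurable_compose[OF fst_meas Y] by (simp add: comp_def)
    show "AE z in \<pi>. norm (Y (fst z)) \<le> norm (\<bar>C\<bar> * (1 + M + norm (fst z - snd z)))"
      using AE_coupling_sample[OF \<pi>]
    proof eventually_elim
      case (elim z)
      then obtain i where i: "i < N" "snd z = xi0 i" by auto
      have "norm (xi0 i) \<le> M"
        unfolding M_def using i(1) by (intro member_le_sum) auto
      then have "norm (fst z) \<le> M + norm (fst z - snd z)"
        using norm_triangle_ineq[of "fst z - snd z" "snd z"] i(2) by simp
      then have "\<bar>C\<bar> * (1 + norm (fst z)) \<le> \<bar>C\<bar> * (1 + M + norm (fst z - snd z))"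
        by (intro mult_left_mono) auto
      moreover have "\<bar>Y (fst z)\<bar> \<le> \<bar>C\<bar> * (1 + norm (fst z))"
        using growth elim by (meson abs_ge_self mult_right_mono norm_ge_zero order_trans
            add_nonneg_nonneg zero_le_one)
      ultimately show ?case
        by simp
    qed
  qed
  then show ?thesis
    by (simp add: integrable_distr_eq[OF fst_meas Y, symmetric] coupling_marginals[OF \<pi>])
qed

text \<open>Samples may repeat, so values attached to the sample indices are turned into a
  function of the sample point by taking minima.\<close>

lemma ex_sample_min_function:
  fixes s :: "nat \<Rightarrow> real"
  obtains \<phi> :: "'a \<Rightarrow> real" and B where "\<phi> \<in> borel_measurable (XiSpace Xi)" "\<And>y. \<bar>\<phi> y\<bar> \<le> B"
    "\<And>i. i < N \<Longrightarrow> \<phi> (xi0 i) \<le> s i"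
    "\<And>i. i < N \<Longrightarrow> \<exists>j<N. xi0 j = xi0 i \<and> \<phi> (xi0 i) = s j"
proof
  define m where "m y = Min (s ` {j. j < N \<and> xi0 j = y})" for y
  define \<phi> where "\<phi> y = (\<Sum>y'\<in>xi0 ` {..<N}. m y' * indicator {y'} y)" for y
  have \<phi>: "\<phi> (xi0 i) = m (xi0 i)" if "i < N" for i
  proof -
    have "\<phi> (xi0 i) = (\<Sum>y'\<in>xi0 ` {..<N}. if y' = xi0 i then m y' else 0)"
      unfolding \<phi>_def by (intro sum.cong) (auto simp: indicator_def)
    then show ?thesis
      using that by (simp add: sum.delta')
  qed
  have "\<phi> \<in> borel_measurable borel"
    unfolding \<phi>_def by measurable
  then show "\<phi> \<in> borel_measurable (XiSpace Xi)"
    using measurable_compose[OF measurable_XiSpace_borel] by simp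
  show "\<bar>\<phi> y\<bar> \<le> (\<Sum>y'\<in>xi0 ` {..<N}. \<bar>m y'\<bar>)" for y
    unfolding \<phi>_def
    by (rule order_trans[OF sum_abs]) (intro sum_mono, auto simp: indicator_def abs_mult)
  fix i assume i: "i < N"
  then have fin: "finite (s ` {j. j < N \<and> xi0 j = xi0 i})" "s ` {j. j < N \<and> xi0 j = xi0 i} \<noteq> {}"
    by auto
  show "\<phi> (xi0 i) \<le> s i"
    unfolding \<phi>[OF i] m_def using fin i by (intro Min_le) auto
  show "\<exists>j<N. xi0 j = xi0 i \<and> \<phi> (xi0 i) = s j"
    using Min_in[OF fin] unfolding \<phi>[OF i] m_def by auto
qed

lemma expectation_le_coupling_dual:
  fixes G :: "'a \<Rightarrow> real" and s :: "nat \<Rightarrow> real"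
  assumes \<pi>: "\<pi> \<in> couplings Xi Q (empirical Xi N xi0)"
    and finite_cost: "(\<integral>\<^sup>+ z. ennreal (norm (fst z - snd z)) \<partial>\<pi>) < \<infinity>"
    and G: "G \<in> borel_measurable (XiSpace Xi)" "integrable Q G"
    and s: "\<forall>i<N. \<forall>\<xi>\<in>Xi. G \<xi> - \<kappa> * norm (\<xi> - xi0 i) \<le> s i"
  shows "(\<integral>\<xi>. G \<xi> \<partial>Q) \<le> \<kappa> * (\<integral>z. norm (fst z - snd z) \<partial>\<pi>) + (\<Sum>i<N. s i) / N"
proof -
  interpret prob_space \<pi> using \<pi> by (simp add: couplings_def)
  obtain \<phi> :: "'a \<Rightarrow> real" and B where \<phi>_meas: "\<phi> \<in> borel_measurable (XiSpace Xi)"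
    and \<phi>_bounded: "\<And>y. \<bar>\<phi> y\<bar> \<le> B" and \<phi>_le: "\<And>i. i < N \<Longrightarrow> \<phi> (xi0 i) \<le> s i"
    and \<phi>_attained: "\<And>i. i < N \<Longrightarrow> \<exists>j<N. xi0 j = xi0 i \<and> \<phi> (xi0 i) = s j"
    using ex_sample_min_function[where s = s] by blast
  have fst_meas: "fst \<in> \<pi> \<rightarrow>\<^sub>M XiSpace Xi" and snd_meas: "snd \<in> \<pi> \<rightarrow>\<^sub>M XiSpace Xi"
    by (rule measurable_coupling[OF \<pi> measurable_fst], rule measurable_coupling[OF \<pi> measurable_snd])
  note marginals = coupling_marginals[OF \<pi>]
  have cost_int: "integrable \<pi> (\<lambda>z. norm (fst z - snd z))"
    by (rule integrable_transport_cost[OF \<pi> finite_cost])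
  have \<phi>_int: "integrable \<pi> (\<lambda>z. \<phi> (snd z))"
    using measurable_compose[OF snd_meas \<phi>_meas] \<phi>_bounded
    by (intro integrable_const_bound[where B = B]) (auto simp: comp_def)
  have G_int: "integrable \<pi> (\<lambda>z. G (fst z))"
    using G(2) by (simp add: integrable_distr_eq[OF fst_meas G(1), symmetric] marginals)
  have "(\<integral>\<xi>. G \<xi> \<partial>Q) = (\<integral>z. G (fst z) \<partial>\<pi>)"
    by (simp add: integral_distr[OF fst_meas G(1), symmetric] marginals)
  also have "\<dots> \<le> (\<integral>z. \<kappa> * norm (fst z - snd z) + \<phi> (snd z) \<partial>\<pi>)"
    using G_int cost_int \<phi>_int
  proof (intro integral_mono_AE)
    show "AE z in \<pi>. G (fst z) \<le> \<kappa> * norm (fst z - snd z) + \<phi> (snd z)"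
      using AE_coupling_sample[OF \<pi>]
    proof eventually_elim
      case (elim z)
      then obtain i j where "i < N" "snd z = xi0 i" "j < N" "xi0 j = xi0 i" "\<phi> (xi0 i) = s j"
        using \<phi>_attained by blast
      then show ?case
        using s elim by force
    qed
  qed simp_all
  also have "\<dots> = \<kappa> * (\<integral>z. norm (fst z - snd z) \<partial>\<pi>) + (\<integral>z. \<phi> (snd z) \<partial>\<pi>)"
    using cost_int \<phi>_int by simp
  also have "(\<integral>z. \<phi> (snd z) \<partial>\<pi>) = (\<integral>y. \<phi> y \<partial>empirical Xi N xi0)"
    using integral_distr[OF snd_meas \<phi>_meas] unfolding marginals by simp
  also have "(\<integral>y. \<phi> y \<partial>empirical Xi N xi0) \<le> (\<Sum>i<N. s i) / N"
    unfolding integral_empirical[OF \<phi>_meas] using \<phi>_le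
    by (intro divide_right_mono sum_mono) auto
  finally show ?thesis
    by simp
qed

lemma expectation_le_transport_dual:
  fixes G :: "'a \<Rightarrow> real" and s :: "nat \<Rightarrow> real"
  assumes Q: "Q \<in> wass_ball Xi N xi0 \<rho>" and \<rho>: "0 \<le> \<rho>" and \<kappa>: "0 \<le> \<kappa>"
    and G: "G \<in> borel_measurable (XiSpace Xi)" "integrable Q G"
    and s: "\<forall>i<N. \<forall>\<xi>\<in>Xi. G \<xi> - \<kappa> * norm (\<xi> - xi0 i) \<le> s i"
  shows "(\<integral>\<xi>. G \<xi> \<partial>Q) \<le> \<kappa> * \<rho> + (\<Sum>i<N. s i) / N"
proof (cases "\<kappa> = 0")
  case True
  obtain \<pi> where "\<pi> \<in> couplings Xi Q (empirical Xi N xi0)"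
    "(\<integral>\<^sup>+ z. ennreal (norm (fst z - snd z)) \<partial>\<pi>) < \<infinity>"
    using ex_finite_cost_coupling[OF Q] by blast
  from expectation_le_coupling_dual[OF this G s] True show ?thesis
    by simp
next
  case False
  with \<kappa> have \<kappa>_pos: "0 < \<kappa>" by simp
  define x where "x = ((\<integral>\<xi>. G \<xi> \<partial>Q) - (\<Sum>i<N. s i) / N) / \<kappa>"
  have "ennreal x \<le> W1 Xi Q (empirical Xi N xi0)"
    unfolding W1_def
  proof (rule INF_greatest)
    fix \<pi> assume \<pi>: "\<pi> \<in> couplings Xi Q (empirical Xi N xi0)"
    show "ennreal x \<le> (\<integral>\<^sup>+ z. ennreal (norm (fst z - snd z)) \<partial>\<pi>)"
    proof (cases "(\<integral>\<^sup>+ z. ennreal (norm (fst z - snd z)) \<partial>\<pi>) < \<infinity>")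
      case True
      have "x \<le> (\<integral>z. norm (fst z - snd z) \<partial>\<pi>)"
        using expectation_le_coupling_dual[OF \<pi> True G s] \<kappa>_pos
        unfolding x_def by (simp add: field_simps)
      then show ?thesis
        by (simp add: ennreal_leI nn_integral_eq_integral[OF integrable_transport_cost[OF \<pi> True]])
    qed (simp add: less_top[symmetric])
  qed
  also have "\<dots> \<le> ennreal \<rho>"
    using Q by (simp add: wass_ball_def)
  finally have "x \<le> \<rho>"
    using \<rho> by simp
  then show ?thesis
    using \<kappa>_pos unfolding x_def by (simp add: field_simps)
qed

end

section \<open>Strong duality via finitely supported transport plans\<close>

text \<open>A plan moves the \<open>i\<close>-th sample to \<open>\<xi>\<close> with probability \<open>pmf P (i, \<xi>)\<close>; finitely supported
  plans suffice to approach the worst case from below.\<close>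

definition plans :: "'a::euclidean_space set \<Rightarrow> nat \<Rightarrow> (nat \<times> 'a) pmf set" where
  "plans Xi N =
     {P. finite (set_pmf P) \<and> set_pmf P \<subseteq> {..<N} \<times> Xi \<and> map_pmf fst P = pmf_of_set {..<N}}"

definition plan_cost :: "(nat \<Rightarrow> 'a::euclidean_space) \<Rightarrow> (nat \<times> 'a) pmf \<Rightarrow> real" where
  "plan_cost xi0 P = (\<integral>x. norm (snd x - xi0 (fst x)) \<partial>measure_pmf P)"

text \<open>The clamp outside \<open>{..<N} \<times> Xi\<close> only makes the map land in \<open>Xi \<times> Xi\<close>; plans never
  charge that region.\<close>

definition plan_pair :: "'a set \<Rightarrow> nat \<Rightarrow> (nat \<Rightarrow> 'a) \<Rightarrow> nat \<times> 'a \<Rightarrow> 'a \<times> 'a" where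
  "plan_pair Xi N xi0 x =
     (if fst x < N \<and> snd x \<in> Xi then (snd x, xi0 (fst x)) else (xi0 0, xi0 0))"

definition plan_target :: "'a::euclidean_space set \<Rightarrow> nat \<Rightarrow> (nat \<Rightarrow> 'a) \<Rightarrow> (nat \<times> 'a) pmf \<Rightarrow> 'a measure" where
  "plan_target Xi N xi0 P = distr (measure_pmf P) (XiSpace Xi) (\<lambda>x. fst (plan_pair Xi N xi0 x))"

lemma plans_mixture:
  assumes P1: "P1 \<in> plans Xi N" and P2: "P2 \<in> plans Xi N" and u: "0 \<le> u" "u \<le> 1"
  obtains P where "P \<in> plans Xi N"
    "\<And>f :: nat \<times> 'a::euclidean_space \<Rightarrow> real. (\<integral>x. f x \<partial>measure_pmf P)
        = u * (\<integral>x. f x \<partial>measure_pmf P1) + (1 - u) * (\<integral>x. f x \<partial>measure_pmf P2)"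
proof
  define P where "P = bind_pmf (bernoulli_pmf u) (\<lambda>b. if b then P1 else P2)"
  define A where "A = set_pmf P1 \<union> set_pmf P2"
  have A: "finite A" "set_pmf P \<subseteq> A"
    using P1 P2 by (auto simp: A_def P_def plans_def split: if_splits)
  have "map_pmf fst P = bind_pmf (bernoulli_pmf u) (\<lambda>b. pmf_of_set {..<N})"
    unfolding P_def map_bind_pmf using P1 P2 by (intro bind_pmf_cong) (auto simp: plans_def)
  then show "P \<in> plans Xi N"
    using A P1 P2 by (auto simp: A_def plans_def intro: finite_subset)
  have pmf_P: "pmf P a = u * pmf P1 a + (1 - u) * pmf P2 a" for a
    unfolding P_def pmf_bind using u by simp
  fix f :: "nat \<times> 'a \<Rightarrow> real"
  have "(\<integral>x. f x \<partial>measure_pmf Q) = (\<Sum>a\<in>A. f a * pmf Q a)" if "set_pmf Q \<subseteq> A" for Q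
    using A(1) that by (intro integral_measure_pmf_real) auto
  then show "(\<integral>x. f x \<partial>measure_pmf P)
      = u * (\<integral>x. f x \<partial>measure_pmf P1) + (1 - u) * (\<integral>x. f x \<partial>measure_pmf P2)"
    using A(2) by (simp add: A_def pmf_P sum_distrib_left sum.distrib[symmetric] algebra_simps)
qed

context
  fixes Xi :: "'a::euclidean_space set" and N :: nat and xi0 :: "nat \<Rightarrow> 'a"
  assumes N_pos: "0 < N" and samples: "\<forall>i<N. xi0 i \<in> Xi"
begin

lemma plan_pair_in: "plan_pair Xi N xi0 x \<in> Xi \<times> Xi"
  using N_pos samples by (auto simp: plan_pair_def)

lemma measurable_plan_pair: "plan_pair Xi N xi0 \<in> measure_pmf P \<rightarrow>\<^sub>M XiSpace Xi \<Otimes>\<^sub>M XiSpace Xi"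
  using plan_pair_in by (simp add: space_pair_measure)

lemma measurable_plan_target_map: "(\<lambda>x. fst (plan_pair Xi N xi0 x)) \<in> measure_pmf P \<rightarrow>\<^sub>M XiSpace Xi"
  using plan_pair_in by (force simp: mem_Times_iff)

lemma AE_plan_pair:
  assumes "P \<in> plans Xi N"
  shows "AE x in measure_pmf P. plan_pair Xi N xi0 x = (snd x, xi0 (fst x))"
  using assms by (auto simp: AE_measure_pmf_iff plans_def plan_pair_def)

lemma integral_plan_target:
  assumes P: "P \<in> plans Xi N" and h: "(h :: 'a \<Rightarrow> real) \<in> borel_measurable (XiSpace Xi)"
  shows "(\<integral>\<xi>. h \<xi> \<partial>plan_target Xi N xi0 P) = (\<integral>x. h (snd x) \<partial>measure_pmf P)"
  unfolding plan_target_def integral_distr[OF measurable_plan_target_map h]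
  using AE_plan_pair[OF P] by (intro integral_cong_AE) auto

lemma distr_plan_sample:
  assumes P: "P \<in> plans Xi N"
  shows "distr (measure_pmf P) (XiSpace Xi) (\<lambda>x. snd (plan_pair Xi N xi0 x)) = empirical Xi N xi0"
proof -
  define k where "k i = (if i < N then xi0 i else xi0 0)" for i
  have k_in: "k i \<in> Xi" for i
    using N_pos samples by (auto simp: k_def)
  have "distr (measure_pmf P) (XiSpace Xi) (\<lambda>x. snd (plan_pair Xi N xi0 x))
      = distr (measure_pmf P) (XiSpace Xi) (\<lambda>x. k (fst x))"
    using AE_plan_pair[OF P] plan_pair_in k_in P
    by (intro distr_cong_AE) (auto simp: k_def mem_Times_iff AE_measure_pmf_iff plans_def)
  also have "\<dots> = distr (distr (measure_pmf P) (count_space UNIV) fst) (XiSpace Xi) k"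
    using k_in by (subst distr_distr) (auto simp: comp_def)
  also have "\<dots> = distr (measure_pmf (pmf_of_set {..<N})) (XiSpace Xi) k"
    using P by (simp add: plans_def map_pmf_rep_eq[symmetric])
  also have "\<dots> = empirical Xi N xi0"
    unfolding empirical_def
  proof (rule measure_eqI)
    fix A assume A: "A \<in> sets (distr (measure_pmf (pmf_of_set {..<N})) (XiSpace Xi) k)"
    have "{..<N} \<inter> k -` A = xi0 -` A \<inter> {..<N}"
      by (auto simp: k_def)
    moreover have "emeasure (measure_pmf (pmf_of_set {..<N})) (k -` A)
        = card ({..<N} \<inter> k -` A) / card {..<N}"
      using N_pos by (intro emeasure_pmf_of_set) auto
    ultimately show "emeasure (distr (measure_pmf (pmf_of_set {..<N})) (XiSpace Xi) k) A
        = emeasure (distr (uniform_count_measure {..<N}) (XiSpace Xi) xi0) A"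
      using A k_in N_pos measurable_samples[OF N_pos samples]
      by (simp add: emeasure_distr emeasure_uniform_count_measure space_uniform_count_measure)
  qed simp
  finally show ?thesis .
qed

lemma plan_target_in_wass_ball:
  assumes P: "P \<in> plans Xi N" and cost: "plan_cost xi0 P \<le> \<rho>"
  shows "plan_target Xi N xi0 P \<in> wass_ball Xi N xi0 \<rho>"
proof -
  define \<pi> where "\<pi> = distr (measure_pmf P) (XiSpace Xi \<Otimes>\<^sub>M XiSpace Xi) (plan_pair Xi N xi0)"
  note prob_space_distr = prob_space.prob_space_distr[OF prob_space_measure_pmf]
  have "\<pi> \<in> couplings Xi (plan_target Xi N xi0 P) (empirical Xi N xi0)"
    unfolding couplings_def \<pi>_def plan_target_def
    using prob_space_distr[OF measurable_plan_pair] distr_plan_sample[OF P]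
    by (simp add: distr_distr[OF measurable_fst measurable_plan_pair]
        distr_distr[OF measurable_snd measurable_plan_pair] comp_def)
  then have "W1 Xi (plan_target Xi N xi0 P) (empirical Xi N xi0)
      \<le> (\<integral>\<^sup>+ z. ennreal (norm (fst z - snd z)) \<partial>\<pi>)"
    unfolding W1_def by (rule INF_lower)
  also have "\<dots> = (\<integral>\<^sup>+ x. ennreal (norm (fst (plan_pair Xi N xi0 x) - snd (plan_pair Xi N xi0 x)))
      \<partial>measure_pmf P)"
    unfolding \<pi>_def by (subst nn_integral_distr[OF measurable_plan_pair]) auto
  also have "\<dots> = (\<integral>\<^sup>+ x. ennreal (norm (snd x - xi0 (fst x))) \<partial>measure_pmf P)"
    using AE_plan_pair[OF P] by (intro nn_integral_cong_AE) auto
  also have "\<dots> = ennreal (plan_cost xi0 P)"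
    unfolding plan_cost_def using P
    by (intro nn_integral_eq_integral integrable_measure_pmf_finite) (auto simp: plans_def)
  also have "\<dots> \<le> ennreal \<rho>"
    using cost by (rule ennreal_leI)
  finally show ?thesis
    using prob_space_distr[OF measurable_plan_target_map]
    by (simp add: wass_ball_def dists_on_def plan_target_def)
qed

lemma deterministic_plan:
  assumes \<zeta>: "\<forall>i<N. \<zeta> i \<in> Xi"
  shows "map_pmf (\<lambda>i. (i, \<zeta> i)) (pmf_of_set {..<N}) \<in> plans Xi N"
    and "\<And>f :: nat \<times> 'a \<Rightarrow> real.
      (\<integral>x. f x \<partial>measure_pmf (map_pmf (\<lambda>i. (i, \<zeta> i)) (pmf_of_set {..<N}))) = (\<Sum>i<N. f (i, \<zeta> i)) / N"
proof -
  have "set_pmf (pmf_of_set {..<N}) = {..<N}"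
    using N_pos by (intro set_pmf_of_set) auto
  then show "map_pmf (\<lambda>i. (i, \<zeta> i)) (pmf_of_set {..<N}) \<in> plans Xi N"
    using \<zeta> by (auto simp: plans_def map_pmf_comp)
  show "(\<integral>x. f x \<partial>measure_pmf (map_pmf (\<lambda>i. (i, \<zeta> i)) (pmf_of_set {..<N}))) = (\<Sum>i<N. f (i, \<zeta> i)) / N"
    for f :: "nat \<times> 'a \<Rightarrow> real"
  proof -
    have "(\<integral>i. f (i, \<zeta> i) \<partial>measure_pmf (pmf_of_set {..<N})) = (\<Sum>i<N. f (i, \<zeta> i)) / card {..<N}"
      using N_pos by (intro integral_pmf_of_set) auto
    then show ?thesis
      by simp
  qed
qed

text \<open>Lagrangian duality over plans, followed by the observation that the Lagrangian is
  maximised by deterministic plans, where it splits into one supremum per sample.\<close>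

lemma dual_le_worst_case_expectation:
  fixes G :: "'a \<Rightarrow> real"
  assumes \<rho>: "0 < \<rho>" and G: "G \<in> borel_measurable (XiSpace Xi)"
  shows "(INF \<kappa>\<in>{0..}. ereal (c + \<kappa> * \<rho>) + ereal (1 / real N) *
            (\<Sum>i<N. SUP \<xi>\<in>Xi. ereal (G \<xi> - \<kappa> * norm (\<xi> - xi0 i))))
         \<le> (SUP Q\<in>wass_ball Xi N xi0 \<rho>. ereal (c + (\<integral>\<xi>. G \<xi> \<partial>Q)))"
    (is "?dual \<le> ?worst")
proof -
  define val where "val P = (\<integral>x. G (snd x) \<partial>measure_pmf P)" for P :: "(nat \<times> 'a) pmf"
  define P0 where "P0 = map_pmf (\<lambda>i. (i, xi0 i)) (pmf_of_set {..<N})"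
  have P0: "P0 \<in> plans Xi N" "plan_cost xi0 P0 = 0"
    using deterministic_plan[OF samples] by (simp_all add: P0_def plan_cost_def)
  have val_le: "ereal (c + val P) \<le> ?worst" if "P \<in> plans Xi N" "plan_cost xi0 P \<le> \<rho>" for P
    using SUP_upper[OF plan_target_in_wass_ball[OF that], of "\<lambda>Q. ereal (c + (\<integral>\<xi>. G \<xi> \<partial>Q))"]
    by (simp add: integral_plan_target[OF that(1) G] val_def)
  show ?thesis
  proof (cases "?worst = \<infinity>")
    case False
    moreover have "ereal (c + val P0) \<le> ?worst"
      using val_le P0 \<rho> by simp
    ultimately obtain w where "?worst = ereal w"
      by (cases ?worst) auto
    define V where "V = w - c"
    with \<open>?worst = ereal w\<close> have V: "?worst = ereal (c + V)"
      by simp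
    have "\<exists>\<kappa>\<ge>0. \<forall>P\<in>plans Xi N. val P \<le> V + \<kappa> * (plan_cost xi0 P - \<rho>)"
    proof (rule exists_lagrange_multiplier)
      fix P1 P2 and u :: real assume "P1 \<in> plans Xi N" "P2 \<in> plans Xi N" "0 \<le> u" "u \<le> 1"
      then obtain P where "P \<in> plans Xi N" and "\<And>f :: nat \<times> 'a \<Rightarrow> real. (\<integral>x. f x \<partial>measure_pmf P)
          = u * (\<integral>x. f x \<partial>measure_pmf P1) + (1 - u) * (\<integral>x. f x \<partial>measure_pmf P2)"
        using plans_mixture by blast
      then show "\<exists>P\<in>plans Xi N. plan_cost xi0 P = u * plan_cost xi0 P1 + (1 - u) * plan_cost xi0 P2
          \<and> val P = u * val P1 + (1 - u) * val P2"
        unfolding plan_cost_def val_def by blast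
    qed (use val_le V P0 \<rho> in auto)
    then obtain \<kappa> where \<kappa>: "0 \<le> \<kappa>"
      and lagrange: "\<And>P. P \<in> plans Xi N \<Longrightarrow> val P \<le> V + \<kappa> * (plan_cost xi0 P - \<rho>)"
      by blast
    have "(\<Sum>i<N. SUP \<xi>\<in>Xi. ereal (G \<xi> - \<kappa> * norm (\<xi> - xi0 i))) \<le> ereal (N * (V - \<kappa> * \<rho>))"
    proof (rule sum_SUP_le_of_selections)
      fix \<zeta> assume "\<forall>i\<in>{..<N}. \<zeta> i \<in> Xi"
      then have \<zeta>: "\<forall>i<N. \<zeta> i \<in> Xi" by simp
      from lagrange[OF deterministic_plan(1)[OF \<zeta>]]
      have "(\<Sum>i<N. G (\<zeta> i)) / N \<le> V + \<kappa> * ((\<Sum>i<N. norm (\<zeta> i - xi0 i)) / N - \<rho>)"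
        unfolding val_def plan_cost_def deterministic_plan(2)[OF \<zeta>] by simp
      then have "(\<Sum>i<N. G (\<zeta> i)) \<le> N * (V - \<kappa> * \<rho>) + \<kappa> * (\<Sum>i<N. norm (\<zeta> i - xi0 i))"
        using N_pos by (simp add: field_simps)
      then show "(\<Sum>i<N. G (\<zeta> i) - \<kappa> * norm (\<zeta> i - xi0 i)) \<le> N * (V - \<kappa> * \<rho>)"
        by (simp add: sum_subtractf flip: sum_distrib_left)
    qed (use Xi_nonempty[OF N_pos samples] in simp_all)
    then have "ereal (1 / real N) * (\<Sum>i<N. SUP \<xi>\<in>Xi. ereal (G \<xi> - \<kappa> * norm (\<xi> - xi0 i)))
        \<le> ereal (V - \<kappa> * \<rho>)"
      using ereal_mult_left_mono[of _ _ "ereal (1 / real N)"] N_pos by fastforce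
    then have "?dual \<le> ereal (c + \<kappa> * \<rho>) + ereal (V - \<kappa> * \<rho>)"
      using \<kappa> by (intro INF_lower2[of \<kappa>] add_left_mono) auto
    then show ?thesis
      using V by simp
  qed simp
qed

end

section \<open>Dual and semi-infinite reformulations\<close>

definition Phi_dual :: "'a::euclidean_space set \<Rightarrow> nat \<Rightarrow> (nat \<Rightarrow> 'a) \<Rightarrow> real \<Rightarrow> real \<Rightarrow> real
    \<Rightarrow> ('a \<Rightarrow> real) \<Rightarrow> ereal" where
  "Phi_dual Xi N xi0 \<rho> \<alpha> lam Y =
     (INF tk\<in>(UNIV \<times> {0..}).
        ereal (lambda_bar \<alpha> lam * fst tk + snd tk * \<rho>)
        + ereal (1 / real N) * (\<Sum>i<N. SUP \<xi>\<in>Xi.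
             ereal (g_fun \<alpha> lam (fst tk) (Y \<xi>) - snd tk * norm (\<xi> - xi0 i))))"

definition Phi_SIP :: "'a::euclidean_space set \<Rightarrow> nat \<Rightarrow> (nat \<Rightarrow> 'a) \<Rightarrow> real \<Rightarrow> real \<Rightarrow> real
    \<Rightarrow> ('a \<Rightarrow> real) \<Rightarrow> ereal" where
  "Phi_SIP Xi N xi0 \<rho> \<alpha> lam Y =
     (INF (t, \<kappa>, s)\<in>{(t, \<kappa>, s). 0 \<le> \<kappa> \<and>
          (\<forall>i<N. \<forall>\<xi>\<in>Xi. g_fun \<alpha> lam t (Y \<xi>) - \<kappa> * norm (\<xi> - xi0 i) \<le> s i)}.
        ereal (lambda_bar \<alpha> lam * t + \<kappa> * \<rho> + (1 / real N) * (\<Sum>i<N. s i)))"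

definition minimax_interchange :: "'a::euclidean_space set \<Rightarrow> nat \<Rightarrow> (nat \<Rightarrow> 'a) \<Rightarrow> real \<Rightarrow> real
    \<Rightarrow> real \<Rightarrow> ('a \<Rightarrow> real) \<Rightarrow> bool" where
  "minimax_interchange Xi N xi0 \<rho> \<alpha> lam Y \<longleftrightarrow>
     (SUP Q\<in>wass_ball Xi N xi0 \<rho>. INF t. ereal (lambda_bar \<alpha> lam * t + (\<integral>\<xi>. g_fun \<alpha> lam t (Y \<xi>) \<partial>Q)))
     = (INF t. SUP Q\<in>wass_ball Xi N xi0 \<rho>. ereal (lambda_bar \<alpha> lam * t + (\<integral>\<xi>. g_fun \<alpha> lam t (Y \<xi>) \<partial>Q)))"

lemma INF_Phi_SIP:
  "(INF f\<in>F. Phi_SIP Xi N xi0 \<rho> \<alpha> lam (Z f))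
   = (INF (f, t, \<kappa>, s)\<in>{(f, t, \<kappa>, s). f \<in> F \<and> 0 \<le> \<kappa> \<and>
          (\<forall>i<N. \<forall>\<xi>\<in>Xi. g_fun \<alpha> lam t (Z f \<xi>) - \<kappa> * norm (\<xi> - xi0 i) \<le> s i)}.
        ereal (lambda_bar \<alpha> lam * t + \<kappa> * \<rho> + (1 / real N) * (\<Sum>i<N. s i)))"
  unfolding Phi_SIP_def by (rule antisym) (auto intro!: INF_greatest INF_lower2)

context
  fixes Xi :: "'a::euclidean_space set" and N :: nat and xi0 :: "nat \<Rightarrow> 'a"
    and \<rho> \<alpha> lam :: real and Y :: "'a \<Rightarrow> real"
  assumes N_pos: "0 < N" and samples: "\<forall>i<N. xi0 i \<in> Xi" and \<rho>: "0 < \<rho>"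
    and \<alpha>: "0 < \<alpha>" "\<alpha> < 1" and lam: "lam \<le> \<alpha>"
    and Y_meas: "Y \<in> borel_measurable (XiSpace Xi)"
    and Y_growth: "\<exists>C. \<forall>\<xi>\<in>Xi. \<bar>Y \<xi>\<bar> \<le> C * (1 + norm \<xi>)"
begin

lemma measurable_g_fun: "(\<lambda>\<xi>. g_fun \<alpha> lam t (Y \<xi>)) \<in> borel_measurable (XiSpace Xi)"
  unfolding g_fun_def using Y_meas by measurable

lemma wass_ball_integrable:
  assumes Q: "Q \<in> wass_ball Xi N xi0 \<rho>"
  shows "prob_space Q" "integrable Q Y" "integrable Q (\<lambda>\<xi>. g_fun \<alpha> lam t (Y \<xi>))"
proof -
  show Q_prob: "prob_space Q"
    using Q by (simp add: wass_ball_def dists_on_def)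
  interpret prob_space Q by (rule Q_prob)
  show Y: "integrable Q Y"
    using Y_growth integrable_wass_ball[OF N_pos samples Q Y_meas] by blast
  moreover have "integrable Q (\<lambda>\<xi>. max (Y \<xi> - t) 0)"
    using Y by (intro integrable_max integrable_diff) auto
  ultimately show "integrable Q (\<lambda>\<xi>. g_fun \<alpha> lam t (Y \<xi>))"
    unfolding g_fun_def by simp
qed

lemma Phi_DRO_eq_SUP_INF:
  "Phi_DRO Xi N xi0 \<rho> \<alpha> lam Y
   = (SUP Q\<in>wass_ball Xi N xi0 \<rho>. INF t. ereal (lambda_bar \<alpha> lam * t + (\<integral>\<xi>. g_fun \<alpha> lam t (Y \<xi>) \<partial>Q)))"
  unfolding Phi_DRO_def using \<alpha> lam
  by (intro SUP_cong refl mean_CVaR_eq_INF wass_ball_integrable(1,2)) auto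

lemma dual_eq_INF_majorants:
  "ereal (lambda_bar \<alpha> lam * t + \<kappa> * \<rho>) + ereal (1 / real N) *
     (\<Sum>i<N. SUP \<xi>\<in>Xi. ereal (g_fun \<alpha> lam t (Y \<xi>) - \<kappa> * norm (\<xi> - xi0 i)))
   = (INF s\<in>{s. \<forall>i<N. \<forall>\<xi>\<in>Xi. g_fun \<alpha> lam t (Y \<xi>) - \<kappa> * norm (\<xi> - xi0 i) \<le> s i}.
        ereal (lambda_bar \<alpha> lam * t + \<kappa> * \<rho> + (1 / real N) * (\<Sum>i<N. s i)))"
  using Xi_nonempty[OF N_pos samples] N_pos by (intro affine_sum_SUP_eq_INF_majorants) auto

lemma Phi_dual_eq_Phi_SIP: "Phi_dual Xi N xi0 \<rho> \<alpha> lam Y = Phi_SIP Xi N xi0 \<rho> \<alpha> lam Y"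
  unfolding Phi_dual_def Phi_SIP_def dual_eq_INF_majorants
  by (rule antisym) (auto intro!: INF_greatest INF_lower2)

lemma Phi_DRO_le_Phi_dual: "Phi_DRO Xi N xi0 \<rho> \<alpha> lam Y \<le> Phi_dual Xi N xi0 \<rho> \<alpha> lam Y"
  unfolding Phi_DRO_eq_SUP_INF Phi_dual_def dual_eq_INF_majorants
proof (intro SUP_least INF_greatest, clarsimp)
  fix Q t \<kappa> and s :: "nat \<Rightarrow> real"
  assume Q: "Q \<in> wass_ball Xi N xi0 \<rho>" and \<kappa>: "0 \<le> \<kappa>"
    and s: "\<forall>i<N. \<forall>\<xi>\<in>Xi. g_fun \<alpha> lam t (Y \<xi>) - \<kappa> * norm (\<xi> - xi0 i) \<le> s i"
  have "(\<integral>\<xi>. g_fun \<alpha> lam t (Y \<xi>) \<partial>Q) \<le> \<kappa> * \<rho> + (\<Sum>i<N. s i) / N"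
    using \<rho> by (intro expectation_le_transport_dual[OF N_pos samples Q _ \<kappa> measurable_g_fun
          wass_ball_integrable(3)[OF Q] s]) simp
  then have "ereal (lambda_bar \<alpha> lam * t + (\<integral>\<xi>. g_fun \<alpha> lam t (Y \<xi>) \<partial>Q))
      \<le> ereal (lambda_bar \<alpha> lam * t + \<kappa> * \<rho> + (\<Sum>i<N. s i) / N)"
    by simp
  then show "(INF t. ereal (lambda_bar \<alpha> lam * t + (\<integral>\<xi>. g_fun \<alpha> lam t (Y \<xi>) \<partial>Q)))
      \<le> ereal (lambda_bar \<alpha> lam * t + \<kappa> * \<rho> + (\<Sum>i<N. s i) / N)"
    by (rule INF_lower2[OF UNIV_I])
qed

lemma Phi_DRO_eq_Phi_dual:
  assumes "minimax_interchange Xi N xi0 \<rho> \<alpha> lam Y"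
  shows "Phi_DRO Xi N xi0 \<rho> \<alpha> lam Y = Phi_dual Xi N xi0 \<rho> \<alpha> lam Y"
proof (rule antisym[OF Phi_DRO_le_Phi_dual])
  have "Phi_dual Xi N xi0 \<rho> \<alpha> lam Y
      \<le> (SUP Q\<in>wass_ball Xi N xi0 \<rho>. ereal (lambda_bar \<alpha> lam * t + (\<integral>\<xi>. g_fun \<alpha> lam t (Y \<xi>) \<partial>Q)))"
    for t
  proof -
    have "Phi_dual Xi N xi0 \<rho> \<alpha> lam Y
        \<le> (INF \<kappa>\<in>{0..}. ereal (lambda_bar \<alpha> lam * t + \<kappa> * \<rho>) + ereal (1 / real N) *
          (\<Sum>i<N. SUP \<xi>\<in>Xi. ereal (g_fun \<alpha> lam t (Y \<xi>) - \<kappa> * norm (\<xi> - xi0 i))))"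
      unfolding Phi_dual_def by (intro INF_greatest INF_lower2[of "(t, _)"]) auto
    also have "\<dots> \<le> (SUP Q\<in>wass_ball Xi N xi0 \<rho>.
        ereal (lambda_bar \<alpha> lam * t + (\<integral>\<xi>. g_fun \<alpha> lam t (Y \<xi>) \<partial>Q)))"
      by (rule dual_le_worst_case_expectation[OF N_pos samples \<rho> measurable_g_fun])
    finally show ?thesis .
  qed
  then have "Phi_dual Xi N xi0 \<rho> \<alpha> lam Y
      \<le> (INF t. SUP Q\<in>wass_ball Xi N xi0 \<rho>. ereal (lambda_bar \<alpha> lam * t + (\<integral>\<xi>. g_fun \<alpha> lam t (Y \<xi>) \<partial>Q)))"
    by (rule INF_greatest)
  then show "Phi_dual Xi N xi0 \<rho> \<alpha> lam Y \<le> Phi_DRO Xi N xi0 \<rho> \<alpha> lam Y"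
    using assms unfolding minimax_interchange_def Phi_DRO_eq_SUP_INF by simp
qed

end

theorem proposition11:
  fixes Xi :: "'a::euclidean_space set"
    and N :: nat and xi0 :: "nat \<Rightarrow> 'a"
    and \<rho> \<alpha> lam :: real
    and od :: "'p::finite \<Rightarrow> 'w" and demand :: "'w \<Rightarrow> real"
    and Z :: "('p \<Rightarrow> real) \<Rightarrow> 'a \<Rightarrow> real"
  assumes Xi_closed: "closed Xi"
    and N_pos: "0 < N"
    and samples: "\<forall>i<N. xi0 i \<in> Xi"
    and rho_pos: "0 < \<rho>"
    and alpha: "0 < \<alpha>" "\<alpha> < 1"
    and lam_le: "lam \<le> \<alpha>"
    and Z_meas: "\<forall>f\<in>feasible_flows od demand. Z f \<in> borel_measurable (XiSpace Xi)"
    and Z_usc: "\<forall>f\<in>feasible_flows od demand. usc_on Xi (Z f)"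
    and Z_growth: "\<forall>f\<in>feasible_flows od demand. \<exists>C. \<forall>\<xi>\<in>Xi. \<bar>Z f \<xi>\<bar> \<le> C * (1 + norm \<xi>)"
  shows
    "(\<forall>f\<in>feasible_flows od demand.
        Phi_DRO Xi N xi0 \<rho> \<alpha> lam (Z f)
        \<le> (INF tk\<in>(UNIV \<times> {0..}).
              ereal (lambda_bar \<alpha> lam * fst tk + snd tk * \<rho>)
              + ereal (1 / real N) * (\<Sum>i<N. SUP \<xi>\<in>Xi.
                   ereal (g_fun \<alpha> lam (fst tk) (Z f \<xi>) - snd tk * norm (\<xi> - xi0 i)))))
   \<and>
    ((convex Xi
      \<and> (\<forall>f\<in>feasible_flows od demand.
           (SUP Q\<in>wass_ball Xi N xi0 \<rho>. INF t. ereal (lambda_bar \<alpha> lam * t + (\<integral>\<xi>. g_fun \<alpha> lam t (Z f \<xi>) \<partial>Q)))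
         = (INF t. SUP Q\<in>wass_ball Xi N xi0 \<rho>. ereal (lambda_bar \<alpha> lam * t + (\<integral>\<xi>. g_fun \<alpha> lam t (Z f \<xi>) \<partial>Q))))
      \<and> (\<forall>f\<in>feasible_flows od demand. \<forall>t. piecewise_concave_on Xi (\<lambda>\<xi>. g_fun \<alpha> lam t (Z f \<xi>))))
     \<longrightarrow>
       (\<forall>f\<in>feasible_flows od demand.
          Phi_DRO Xi N xi0 \<rho> \<alpha> lam (Z f)
          = (INF tk\<in>(UNIV \<times> {0..}).
              ereal (lambda_bar \<alpha> lam * fst tk + snd tk * \<rho>)
              + ereal (1 / real N) * (\<Sum>i<N. SUP \<xi>\<in>Xi.
                   ereal (g_fun \<alpha> lam (fst tk) (Z f \<xi>) - snd tk * norm (\<xi> - xi0 i))))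
        \<and> Phi_DRO Xi N xi0 \<rho> \<alpha> lam (Z f)
          = (INF (t, \<kappa>, s)\<in>{(t, \<kappa>, s). 0 \<le> \<kappa> \<and>
                 (\<forall>i<N. \<forall>\<xi>\<in>Xi. g_fun \<alpha> lam t (Z f \<xi>) - \<kappa> * norm (\<xi> - xi0 i) \<le> s i)}.
               ereal (lambda_bar \<alpha> lam * t + \<kappa> * \<rho> + (1 / real N) * (\<Sum>i<N. s i))))
       \<and> (INF f\<in>feasible_flows od demand. Phi_DRO Xi N xi0 \<rho> \<alpha> lam (Z f))
         = (INF (f, t, \<kappa>, s)\<in>{(f, t, \<kappa>, s). f \<in> feasible_flows od demand \<and> 0 \<le> \<kappa> \<and>
                 (\<forall>i<N. \<forall>\<xi>\<in>Xi. g_fun \<alpha> lam t (Z f \<xi>) - \<kappa> * norm (\<xi> - xi0 i) \<le> s i)}.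
               ereal (lambda_bar \<alpha> lam * t + \<kappa> * \<rho> + (1 / real N) * (\<Sum>i<N. s i))))"
proof -
  let ?F = "feasible_flows od demand"
  note setting = N_pos samples rho_pos alpha lam_le
  have upper: "Phi_DRO Xi N xi0 \<rho> \<alpha> lam (Z f) \<le> Phi_dual Xi N xi0 \<rho> \<alpha> lam (Z f)"
    if "f \<in> ?F" for f
    using Phi_DRO_le_Phi_dual[OF setting] Z_meas Z_growth that by blast
  have exact: "Phi_DRO Xi N xi0 \<rho> \<alpha> lam (Z f) = Phi_dual Xi N xi0 \<rho> \<alpha> lam (Z f)"
    if "f \<in> ?F" "minimax_interchange Xi N xi0 \<rho> \<alpha> lam (Z f)" for f
    using Phi_DRO_eq_Phi_dual[OF setting] Z_meas Z_growth that by blast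
  have sip: "Phi_dual Xi N xi0 \<rho> \<alpha> lam (Z f) = Phi_SIP Xi N xi0 \<rho> \<alpha> lam (Z f)"
    if "f \<in> ?F" for f
    using Phi_dual_eq_Phi_SIP[OF setting] Z_meas Z_growth that by blast
  show ?thesis
    unfolding Phi_dual_def[symmetric] Phi_SIP_def[symmetric] minimax_interchange_def[symmetric]
      INF_Phi_SIP[symmetric]
    using upper exact sip by (auto intro: INF_cong)
qed

end
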